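(* Let $(E,(\cdot,\cdot),\mathcal H)$ be an extended affine Lie algebra with root system $R$. For $\alpha\in R^\times$ and $\sigma\in R^0$ with $\alpha+\sigma\in R$, we have $\big([E_{\alpha+\sigma},E_{-\alpha}],[E_{-\alpha-\sigma},E_{\alpha}]\big)\neq\{0\}$.
   Context: All Lie algebras are over $\mathbb C$. An extended affine Lie algebra (EALA) is a triple $(E,(\cdot,\cdot),\mathcal H)$ where $E$ is a Lie algebra, $\mathcal H$ a subalgebra and $(\cdot,\cdot)$ a bilinear form on $E$ such that: (EA1) the form is symmetric, non-degenerate and invariant; (EA2) $\mathcal H$ is finite-dimensional, $E=\bigoplus_{\alpha\in\mathcal H^*}E_\alpha$ with $E_\alpha=\{x:[h,x]=\alpha(h)x\ \forall h\in\mathcal H\}$ and $E_0=\mathcal H$; the root system is $R=\{\alpha:E_\alpha\neq0\}$; $t_\alpha\in\mathcal H$ is given by $\alpha(h)=(h,t_\alpha)$, $(\alpha,\beta):=(t_\alpha,t_\beta)$, $R^\times=\{\alpha\in R:(\alpha,\alpha)\neq0\}$, $R^0=R\setminus R^\times$; (EA3) $\mathrm{ad}\,x$ is locally nilpotent for $x\in E_\alpha$, $\alpha\in R^\times$; (EA4) $R$ is discrete in $\mathcal H^*$; (EA5) $R^\times$ is connected (not a union of two nonempty mutually orthogonal subsets) and every isotropic root is non-isolated. Root systems are assumed reduced. *)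

theory Defs
  imports Complex_Main
begin

text \<open>Throughout, the complex vector space \<open>E\<close> is a type \<open>'a::ab_group_add\<close> together
  with a scalar multiplication \<open>sc :: complex \<Rightarrow> 'a \<Rightarrow> 'a\<close> satisfying the module axioms.\<close>

definition bilinear_br :: "(complex \<Rightarrow> 'a::ab_group_add \<Rightarrow> 'a) \<Rightarrow> ('a \<Rightarrow> 'a \<Rightarrow> 'a) \<Rightarrow> bool" where
  "bilinear_br sc g \<longleftrightarrow>
     (\<forall>x y z. g (x + y) z = g x z + g y z) \<and> (\<forall>x y z. g x (y + z) = g x y + g x z) \<and>
     (\<forall>c x y. g (sc c x) y = sc c (g x y)) \<and> (\<forall>c x y. g x (sc c y) = sc c (g x y))"

definition bilinear_form :: "(complex \<Rightarrow> 'a::ab_group_add \<Rightarrow> 'a) \<Rightarrow> ('a \<Rightarrow> 'a \<Rightarrow> complex) \<Rightarrow> bool" where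
  "bilinear_form sc g \<longleftrightarrow>
     (\<forall>x y z. g (x + y) z = g x z + g y z) \<and> (\<forall>x y z. g x (y + z) = g x y + g x z) \<and>
     (\<forall>c x y. g (sc c x) y = c * g x y) \<and> (\<forall>c x y. g x (sc c y) = c * g x y)"

definition lie_algebra :: "(complex \<Rightarrow> 'a::ab_group_add \<Rightarrow> 'a) \<Rightarrow> ('a \<Rightarrow> 'a \<Rightarrow> 'a) \<Rightarrow> bool" where
  "lie_algebra sc br \<longleftrightarrow> module sc \<and> bilinear_br sc br \<and> (\<forall>x. br x x = 0) \<and>
     (\<forall>x y z. br x (br y z) + br y (br z x) + br z (br x y) = 0)"

text \<open>The dual space \<open>H\<^sup>*\<close>: linear functionals on \<open>H\<close>, represented extensionally
  (value 0 outside \<open>H\<close>) so that equality of functionals is equality of functions.\<close>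
definition dual_space :: "(complex \<Rightarrow> 'a::ab_group_add \<Rightarrow> 'a) \<Rightarrow> 'a set \<Rightarrow> ('a \<Rightarrow> complex) set" where
  "dual_space sc H = {\<alpha>. (\<forall>x\<in>H. \<forall>y\<in>H. \<alpha> (x + y) = \<alpha> x + \<alpha> y) \<and>
                      (\<forall>c. \<forall>x\<in>H. \<alpha> (sc c x) = c * \<alpha> x) \<and> (\<forall>x. x \<notin> H \<longrightarrow> \<alpha> x = 0)}"

definition root_space :: "(complex \<Rightarrow> 'a::ab_group_add \<Rightarrow> 'a) \<Rightarrow> ('a \<Rightarrow> 'a \<Rightarrow> 'a) \<Rightarrow> 'a set \<Rightarrow> ('a \<Rightarrow> complex) \<Rightarrow> 'a set" where
  "root_space sc br H \<alpha> = {x. \<forall>h\<in>H. br h x = sc (\<alpha> h) x}"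

definition roots :: "(complex \<Rightarrow> 'a::ab_group_add \<Rightarrow> 'a) \<Rightarrow> ('a \<Rightarrow> 'a \<Rightarrow> 'a) \<Rightarrow> 'a set \<Rightarrow> ('a \<Rightarrow> complex) set" where
  "roots sc br H = {\<alpha> \<in> dual_space sc H. root_space sc br H \<alpha> \<noteq> {0}}"

definition tvec :: "('a \<Rightarrow> 'a \<Rightarrow> complex) \<Rightarrow> 'a set \<Rightarrow> ('a \<Rightarrow> complex) \<Rightarrow> 'a" where
  "tvec form H \<alpha> = (THE t. t \<in> H \<and> (\<forall>h\<in>H. \<alpha> h = form h t))"

definition dual_form :: "('a \<Rightarrow> 'a \<Rightarrow> complex) \<Rightarrow> 'a set \<Rightarrow> ('a \<Rightarrow> complex) \<Rightarrow> ('a \<Rightarrow> complex) \<Rightarrow> complex" where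
  "dual_form form H \<alpha> \<beta> = form (tvec form H \<alpha>) (tvec form H \<beta>)"

definition nonisotropic_roots :: "(complex \<Rightarrow> 'a::ab_group_add \<Rightarrow> 'a) \<Rightarrow> ('a \<Rightarrow> 'a \<Rightarrow> 'a) \<Rightarrow> ('a \<Rightarrow> 'a \<Rightarrow> complex) \<Rightarrow> 'a set \<Rightarrow> ('a \<Rightarrow> complex) set" where
  "nonisotropic_roots sc br form H = {\<alpha> \<in> roots sc br H. dual_form form H \<alpha> \<alpha> \<noteq> 0}"

definition isotropic_roots :: "(complex \<Rightarrow> 'a::ab_group_add \<Rightarrow> 'a) \<Rightarrow> ('a \<Rightarrow> 'a \<Rightarrow> 'a) \<Rightarrow> ('a \<Rightarrow> 'a \<Rightarrow> complex) \<Rightarrow> 'a set \<Rightarrow> ('a \<Rightarrow> complex) set" where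
  "isotropic_roots sc br form H = roots sc br H - nonisotropic_roots sc br form H"

text \<open>Discreteness of a subset of \<open>H\<^sup>*\<close> (\<open>H\<close> finite-dimensional): the (unique Hausdorff
  vector space) topology of \<open>H\<^sup>*\<close> is that of pointwise convergence on a finite spanning set of \<open>H\<close>.\<close>
definition discrete_in_dual :: "(complex \<Rightarrow> 'a::ab_group_add \<Rightarrow> 'a) \<Rightarrow> 'a set \<Rightarrow> ('a \<Rightarrow> complex) set \<Rightarrow> bool" where
  "discrete_in_dual sc H S \<longleftrightarrow> (\<exists>B. finite B \<and> B \<subseteq> H \<and> module.span sc B = H \<and>
     (\<forall>\<alpha>\<in>S. \<exists>\<epsilon>>0. \<forall>\<beta>\<in>S. (\<forall>h\<in>B. cmod (\<beta> h - \<alpha> h) < \<epsilon>) \<longrightarrow> \<beta> = \<alpha>))"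

definition eala :: "(complex \<Rightarrow> 'a::ab_group_add \<Rightarrow> 'a) \<Rightarrow> ('a \<Rightarrow> 'a \<Rightarrow> 'a) \<Rightarrow> ('a \<Rightarrow> 'a \<Rightarrow> complex) \<Rightarrow> 'a set \<Rightarrow> bool" where
  "eala sc br form H \<longleftrightarrow>
     lie_algebra sc br \<and>
     \<comment> \<open>EA1\<close>
     bilinear_form sc form \<and> (\<forall>x y. form x y = form y x) \<and>
     (\<forall>x. (\<forall>y. form x y = 0) \<longrightarrow> x = 0) \<and>
     (\<forall>x y z. form (br x y) z = form x (br y z)) \<and>
     \<comment> \<open>EA2\<close>
     module.subspace sc H \<and> (\<forall>x\<in>H. \<forall>y\<in>H. br x y \<in> H) \<and>
     (\<exists>B. finite B \<and> module.span sc B = H) \<and>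
     (\<forall>x. \<exists>A g. finite A \<and> A \<subseteq> dual_space sc H \<and> (\<forall>\<alpha>\<in>A. g \<alpha> \<in> root_space sc br H \<alpha>) \<and>
              x = (\<Sum>\<alpha>\<in>A. g \<alpha>)) \<and>
     root_space sc br H (\<lambda>_. 0) = H \<and>
     \<comment> \<open>EA3\<close>
     (\<forall>\<alpha>\<in>nonisotropic_roots sc br form H. \<forall>x\<in>root_space sc br H \<alpha>. \<forall>y. \<exists>n. (br x ^^ n) y = 0) \<and>
     \<comment> \<open>EA4\<close>
     discrete_in_dual sc H (roots sc br H) \<and>
     \<comment> \<open>EA5\<close>
     \<not> (\<exists>A B. A \<noteq> {} \<and> B \<noteq> {} \<and> A \<union> B = nonisotropic_roots sc br form H \<and>
              (\<forall>a\<in>A. \<forall>b\<in>B. dual_form form H a b = 0)) \<and>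
     (\<forall>\<sigma>\<in>isotropic_roots sc br form H. \<exists>\<alpha>\<in>nonisotropic_roots sc br form H.
          (\<lambda>h. \<alpha> h + \<sigma> h) \<in> roots sc br H) \<and>
     \<comment> \<open>reduced root system\<close>
     (\<forall>\<alpha>\<in>nonisotropic_roots sc br form H. (\<lambda>h. 2 * \<alpha> h) \<notin> roots sc br H)"

definition bracket_set :: "(complex \<Rightarrow> 'a::ab_group_add \<Rightarrow> 'a) \<Rightarrow> ('a \<Rightarrow> 'a \<Rightarrow> 'a) \<Rightarrow> 'a set \<Rightarrow> 'a set \<Rightarrow> 'a set" where
  "bracket_set sc br A B = module.span sc {br x y | x y. x \<in> A \<and> y \<in> B}"

end

theory Submission
  imports Defs
begin

(*
  Choose e in E_alpha and f in E_-alpha with (e, f) = 1. Then t = [e, f] is t_alpha, so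
  alpha(t) = (alpha, alpha) is nonzero, and ad e, ad f are locally nilpotent by (EA3). The
  sl2 computation then shows: a nonzero v in E_gamma with [f, [e, v]] = 0 has
  gamma(t) in (alpha(t)/2) N, and one with [e, [f, v]] = 0 has -gamma(t) in (alpha(t)/2) N.

  Suppose ([x, f], [y, e]) = 0 for all x in E_(alpha+sigma), y in E_(-alpha-sigma). By
  invariance and the nondegenerate pairing of E_(alpha+sigma) with E_(-alpha-sigma), this
  means [f, [e, y]] = 0, whence (-alpha-sigma)(t) in (alpha(t)/2) N. A nonzero [e, y] in
  E_(-sigma) would give sigma(t) in (alpha(t)/2) N; so [e, E_(-alpha-sigma)] = 0, hence
  [e, E_sigma] = 0 by nondegeneracy, and again sigma(t) in (alpha(t)/2) N. Adding,
  -alpha(t) would lie in (alpha(t)/2) N, which is absurd.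
*)

(* The usual highest-weight computation, which only needs F (E v) = 0 rather than E v = 0. *)
lemma sl2_raise_lower_power:
  fixes sc :: "'k::field_char_0 \<Rightarrow> 'a::ab_group_add \<Rightarrow> 'a" and E F :: "'a \<Rightarrow> 'a"
  assumes "vector_space sc" and F_scale: "\<And>d x. F (sc d x) = sc d (F x)"
    and commutator: "\<And>k. E (F ((F^^k) v)) = F (E ((F^^k) v)) + sc (c - of_nat k * a) ((F^^k) v)"
    and "F (E v) = 0"
  shows "E ((F^^Suc k) v) = sc (of_nat (Suc k) * (c - a * of_nat k / 2)) ((F^^k) v)"
proof (induction k)
  case 0
  then show ?case using commutator[of 0] \<open>F (E v) = 0\<close> by simp
next
  case (Suc k)
  interpret vector_space sc by fact
  have "E ((F^^Suc (Suc k)) v) = F (E ((F^^Suc k) v)) + sc (c - of_nat (Suc k) * a) ((F^^Suc k) v)"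
    using commutator[of "Suc k"] by simp
  also have "\<dots> = sc (of_nat (Suc k) * (c - a * of_nat k / 2)) ((F^^Suc k) v)
      + sc (c - of_nat (Suc k) * a) ((F^^Suc k) v)"
    using Suc.IH by (simp add: F_scale)
  also have "\<dots> = sc (of_nat (Suc k) * (c - a * of_nat k / 2) + (c - of_nat (Suc k) * a)) ((F^^Suc k) v)"
    by (simp only: scale_left_distrib)
  also have "of_nat (Suc k) * (c - a * of_nat k / 2) + (c - of_nat (Suc k) * a)
      = of_nat (Suc (Suc k)) * (c - a * of_nat (Suc k) / 2)"
    by (simp add: field_simps)
  finally show ?case .
qed

lemma sl2_weight_half_multiple:
  fixes sc :: "'k::field_char_0 \<Rightarrow> 'a::ab_group_add \<Rightarrow> 'a" and E F :: "'a \<Rightarrow> 'a"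
  assumes vs: "vector_space sc"
    and "E 0 = 0" and F_scale: "\<And>d x. F (sc d x) = sc d (F x)"
    and commutator: "\<And>k. E (F ((F^^k) v)) = F (E ((F^^k) v)) + sc (c - of_nat k * a) ((F^^k) v)"
    and FE: "F (E v) = 0" and "(F^^M) v = 0" and "v \<noteq> 0"
  shows "\<exists>n::nat. c = a * of_nat n / 2"
proof -
  interpret vector_space sc by (rule vs)
  obtain n where n: "(F^^n) v = 0" "\<forall>m<n. (F^^m) v \<noteq> 0"
    using \<open>(F^^M) v = 0\<close> exists_least_iff[of "\<lambda>n. (F^^n) v = 0"] by blast
  then obtain m where "n = Suc m" using \<open>v \<noteq> 0\<close> by (cases n) auto
  then have "sc (of_nat (Suc m) * (c - a * of_nat m / 2)) ((F^^m) v) = 0"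
    using sl2_raise_lower_power[OF vs F_scale commutator FE, of m] n(1) \<open>E 0 = 0\<close> by simp
  then have "c = a * of_nat m / 2" using n(2) \<open>n = Suc m\<close> by (simp del: of_nat_Suc)
  then show ?thesis by blast
qed

lemma neg_not_sum_of_half_multiples:
  fixes a :: "'k::field_char_0"
  assumes "a \<noteq> 0" and m: "- a - s = a * of_nat m / 2" and n: "s = a * of_nat n / 2"
  shows False
proof -
  have "- a = a * of_nat m / 2 + a * of_nat n / 2" using m n by (metis diff_add_cancel)
  then have sum: "a * of_nat m + a * of_nat n = - (2 * a)" by (simp add: field_simps)
  have "a * of_nat (m + n + 2) = (a * of_nat m + a * of_nat n) + 2 * a" by (simp add: algebra_simps)
  also have "\<dots> = 0" unfolding sum by simp
  finally show False using assms(1) by (simp only: mult_eq_0_iff of_nat_eq_0_iff) simp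
qed

locale extended_affine_lie_algebra =
  fixes sc :: "complex \<Rightarrow> 'a::ab_group_add \<Rightarrow> 'a" and br :: "'a \<Rightarrow> 'a \<Rightarrow> 'a"
    and form :: "'a \<Rightarrow> 'a \<Rightarrow> complex" and H :: "'a set"
  assumes eala: "eala sc br form H"
begin

abbreviation rs :: "('a \<Rightarrow> complex) \<Rightarrow> 'a set" where
  "rs \<equiv> root_space sc br H"

lemma lie_algebra: "lie_algebra sc br"
  and bilinear_form: "bilinear_form sc form"
  and form_commute: "form x y = form y x"
  and form_nondegenerate: "(\<And>y. form x y = 0) \<Longrightarrow> x = 0"
  and root_space_decomposition:
    "\<exists>A g. finite A \<and> A \<subseteq> dual_space sc H \<and> (\<forall>\<gamma>\<in>A. g \<gamma> \<in> rs \<gamma>) \<and> x = (\<Sum>\<gamma>\<in>A. g \<gamma>)"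
  and root_space_zero: "rs (\<lambda>_. 0) = H"
  and ad_nilpotent: "\<alpha> \<in> nonisotropic_roots sc br form H \<Longrightarrow> e \<in> rs \<alpha> \<Longrightarrow> \<exists>n. (br e ^^ n) v = 0"
  using eala unfolding eala_def by simp_all

lemma form_invariant: "form (br x y) z = form x (br y z)"
proof -
  have "\<forall>x y z. form (br x y) z = form x (br y z)"
    using eala unfolding eala_def by (elim conjE)
  then show ?thesis by blast
qed

sublocale vector_space sc
  using lie_algebra unfolding lie_algebra_def module_iff_vector_space by blast

lemma bracket_add_left: "br (x + y) z = br x z + br y z"
  and bracket_add_right: "br x (y + z) = br x y + br x z"
  and bracket_scale_left: "br (sc c x) y = sc c (br x y)"
  and bracket_scale_right: "br x (sc c y) = sc c (br x y)"
  and bracket_self: "br x x = 0"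
  and jacobi: "br x (br y z) + br y (br z x) + br z (br x y) = 0"
  using lie_algebra unfolding lie_algebra_def bilinear_br_def by simp_all

lemma form_add_left: "form (x + y) z = form x z + form y z"
  and form_add_right: "form x (y + z) = form x y + form x z"
  and form_scale_left: "form (sc c x) y = c * form x y"
  and form_scale_right: "form x (sc c y) = c * form x y"
  using bilinear_form unfolding bilinear_form_def by simp_all

sublocale bracket_right: additive "br x" for x
  by unfold_locales (rule bracket_add_right)

sublocale form_left: additive "\<lambda>x. form x y" for y
  by unfold_locales (rule form_add_left)

sublocale form_right: additive "form x" for x
  by unfold_locales (rule form_add_right)

lemma bracket_anticomm: "br x y = - br y x"
proof -
  have "br (x + y) (x + y) = br x y + br y x"
    unfolding bracket_add_left bracket_add_right by (simp add: bracket_self)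
  then show ?thesis by (simp add: bracket_self eq_neg_iff_add_eq_0)
qed

lemma bracket_leibniz: "br x (br y z) = br y (br x z) + br (br x y) z"
  using jacobi[of x y z] bracket_anticomm[of z x] bracket_anticomm[of z "br x y"]
  by (simp add: bracket_right.minus algebra_simps eq_neg_iff_add_eq_0)

lemma zero_in_root_space: "0 \<in> rs \<gamma>"
  unfolding root_space_def by (simp add: bracket_right.zero)

lemma root_space_scale: "x \<in> rs \<gamma> \<Longrightarrow> sc c x \<in> rs \<gamma>"
  unfolding root_space_def by (simp add: bracket_scale_right scale_left_commute)

lemma root_space_diff: "x \<in> rs \<gamma> \<Longrightarrow> y \<in> rs \<gamma> \<Longrightarrow> x - y \<in> rs \<gamma>"
  unfolding root_space_def by (simp add: bracket_right.diff scale_right_diff_distrib)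

lemma bracket_H_root_space: "x \<in> rs \<gamma> \<Longrightarrow> h \<in> H \<Longrightarrow> br h x = sc (\<gamma> h) x"
  unfolding root_space_def by simp

lemma nonzero_in_root_space:
  assumes "\<gamma> \<in> roots sc br H"
  obtains x where "x \<in> rs \<gamma>" "x \<noteq> 0"
  using assms zero_in_root_space unfolding roots_def by blast

lemma bracket_root_spaces:
  assumes x: "x \<in> rs \<gamma>" and y: "y \<in> rs \<delta>"
    and weight: "\<And>h. h \<in> H \<Longrightarrow> \<epsilon> h = \<gamma> h + \<delta> h"
  shows "br x y \<in> rs \<epsilon>"
  unfolding root_space_def
proof (intro CollectI ballI)
  fix h assume h: "h \<in> H"
  have "br h (br x y) = br x (br h y) + br (br h x) y" by (rule bracket_leibniz)
  also have "\<dots> = sc (\<gamma> h + \<delta> h) (br x y)"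
    using bracket_H_root_space[OF x h] bracket_H_root_space[OF y h]
    by (simp add: bracket_scale_left bracket_scale_right scale_left_distrib add.commute)
  finally show "br h (br x y) = sc (\<epsilon> h) (br x y)" using weight[OF h] by simp
qed

lemma ad_power_root_space:
  assumes "x \<in> rs \<gamma>" "e \<in> rs \<beta>"
  shows "(br e ^^ k) x \<in> rs (\<lambda>h. \<gamma> h + of_nat k * \<beta> h)"
proof (induction k)
  case (Suc k)
  have "br e ((br e ^^ k) x) \<in> rs (\<lambda>h. \<gamma> h + of_nat (Suc k) * \<beta> h)"
    by (rule bracket_root_spaces[OF assms(2) Suc.IH]) (simp add: algebra_simps)
  then show ?case by simp
qed (use assms in simp)

lemma root_spaces_orthogonal:
  assumes x: "x \<in> rs \<gamma>" and y: "y \<in> rs \<delta>" and h: "h \<in> H" and "\<gamma> h + \<delta> h \<noteq> 0"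
  shows "form x y = 0"
proof -
  have "- (\<gamma> h * form x y) = \<delta> h * form x y"
    using form_invariant[of x h y] bracket_anticomm[of x h]
      bracket_H_root_space[OF x h] bracket_H_root_space[OF y h]
    by (simp add: form_left.minus form_scale_left form_scale_right)
  then have "(\<gamma> h + \<delta> h) * form x y = 0" by (simp add: distrib_right add_eq_0_iff)
  with \<open>\<gamma> h + \<delta> h \<noteq> 0\<close> show ?thesis by simp
qed

lemma root_space_pairing_nondegenerate:
  assumes \<gamma>: "\<gamma> \<in> dual_space sc H" and x: "x \<in> rs \<gamma>"
    and orth: "\<And>y. y \<in> rs (\<lambda>h. - \<gamma> h) \<Longrightarrow> form x y = 0"
  shows "x = 0"
proof (rule form_nondegenerate)
  fix y
  obtain A g where A: "finite A" "A \<subseteq> dual_space sc H" "\<forall>\<delta>\<in>A. g \<delta> \<in> rs \<delta>"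
    and y: "y = (\<Sum>\<delta>\<in>A. g \<delta>)"
    using root_space_decomposition[of y] by blast
  have "form x (g \<delta>) = 0" if "\<delta> \<in> A" for \<delta>
  proof (cases "\<delta> = (\<lambda>h. - \<gamma> h)")
    case True
    then show ?thesis using A(3) orth that by blast
  next
    case False
    then obtain h where h: "\<delta> h \<noteq> - \<gamma> h" by blast
    moreover have "\<delta> h = 0" "\<gamma> h = 0" if "h \<notin> H"
      using that \<gamma> A(2) \<open>\<delta> \<in> A\<close> unfolding dual_space_def by auto
    ultimately have "h \<in> H" by force
    moreover have "\<gamma> h + \<delta> h \<noteq> 0" using h by (simp add: add_eq_0_iff)
    ultimately show ?thesis using root_spaces_orthogonal x A(3) that by blast
  qed
  then show "form x y = 0" using y by (simp add: form_right.sum)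
qed

lemma root_space_pairing_partner:
  assumes "\<gamma> \<in> dual_space sc H" "x \<in> rs \<gamma>" "x \<noteq> 0"
  obtains y where "y \<in> rs (\<lambda>h. - \<gamma> h)" "form x y = 1"
proof -
  obtain y where y: "y \<in> rs (\<lambda>h. - \<gamma> h)" "form x y \<noteq> 0"
    using root_space_pairing_nondegenerate assms by blast
  then show ?thesis
    using that[of "sc (1 / form x y) y"] root_space_scale by (simp add: form_scale_right)
qed

lemma tvec_eqI:
  assumes t: "t \<in> H" and \<gamma>: "\<And>h. h \<in> H \<Longrightarrow> \<gamma> h = form h t"
  shows "tvec form H \<gamma> = t"
  unfolding tvec_def
proof (rule the_equality)
  show "t \<in> H \<and> (\<forall>h\<in>H. \<gamma> h = form h t)" using assms by blast
next
  fix t' assume t': "t' \<in> H \<and> (\<forall>h\<in>H. \<gamma> h = form h t')"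
  have "t' - t = 0"
  proof (rule root_space_pairing_nondegenerate[of "\<lambda>_. 0"])
    show "(\<lambda>_. 0) \<in> dual_space sc H" unfolding dual_space_def by simp
    show "t' - t \<in> rs (\<lambda>_. 0)" using root_space_zero t t' root_space_diff by blast
    fix h assume "h \<in> rs (\<lambda>h. - 0)"
    then have "h \<in> H" using root_space_zero by simp
    then have "form h t' = form h t" using t' \<gamma> by simp
    then show "form (t' - t) h = 0" by (simp add: form_commute[of _ h] form_right.diff)
  qed
  then show "t' = t" by simp
qed

lemma dual_space_uminus: "\<gamma> \<in> dual_space sc H \<Longrightarrow> (\<lambda>h. - \<gamma> h) \<in> dual_space sc H"
  unfolding dual_space_def by simp

lemma bracket_in_bracket_set: "x \<in> A \<Longrightarrow> y \<in> B \<Longrightarrow> br x y \<in> bracket_set sc br A B"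
  unfolding bracket_set_def by (rule span_base) blast

end

locale eala_root_pair = extended_affine_lie_algebra +
  fixes \<alpha> :: "'a \<Rightarrow> complex" and e f :: 'a
  assumes nonisotropic: "\<alpha> \<in> nonisotropic_roots sc br form H"
    and e_in: "e \<in> rs \<alpha>" and f_in: "f \<in> rs (\<lambda>h. - \<alpha> h)" and form_e_f: "form e f = 1"
begin

abbreviation t\<^sub>\<alpha> :: 'a where
  "t\<^sub>\<alpha> \<equiv> br e f"

lemma t_in_H: "t\<^sub>\<alpha> \<in> H"
  using bracket_root_spaces[OF e_in f_in, of "\<lambda>_. 0"] root_space_zero by simp

lemma root_eq_form_t: "h \<in> H \<Longrightarrow> \<alpha> h = form h t\<^sub>\<alpha>"
  using form_invariant[of h e f] bracket_H_root_space[OF e_in] form_e_f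
  by (simp add: form_scale_left)

lemma tvec_root: "tvec form H \<alpha> = t\<^sub>\<alpha>"
  using tvec_eqI t_in_H root_eq_form_t by blast

lemma root_t_nonzero: "\<alpha> t\<^sub>\<alpha> \<noteq> 0"
  using nonisotropic tvec_root root_eq_form_t[OF t_in_H]
  unfolding nonisotropic_roots_def dual_form_def by simp

lemma neg_root_nonisotropic: "(\<lambda>h. - \<alpha> h) \<in> nonisotropic_roots sc br form H"
proof -
  have "\<alpha> \<in> dual_space sc H"
    using nonisotropic unfolding nonisotropic_roots_def roots_def by blast
  then have "(\<lambda>h. - \<alpha> h) \<in> roots sc br H"
    using f_in form_e_f unfolding roots_def dual_space_def by (auto simp: form_right.zero)
  moreover have "- t\<^sub>\<alpha> \<in> H"
    using root_space_diff[of 0 "\<lambda>_. 0" t\<^sub>\<alpha>] zero_in_root_space[of "\<lambda>_. 0"] t_in_H root_space_zero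
    by simp
  then have "tvec form H (\<lambda>h. - \<alpha> h) = - t\<^sub>\<alpha>"
    by (rule tvec_eqI) (simp add: root_eq_form_t form_right.minus)
  ultimately show ?thesis
    using root_t_nonzero root_eq_form_t[OF t_in_H]
    unfolding nonisotropic_roots_def dual_form_def by (simp add: form_left.minus form_right.minus)
qed

lemma weight_half_multiple_if_lower_raise_zero:
  assumes v: "v \<in> rs \<gamma>" "v \<noteq> 0" and kernel: "br f (br e v) = 0"
  shows "\<exists>n::nat. \<gamma> t\<^sub>\<alpha> = \<alpha> t\<^sub>\<alpha> * of_nat n / 2"
proof -
  obtain M where M: "(br f ^^ M) v = 0" using ad_nilpotent[OF neg_root_nonisotropic f_in] by blast
  have commutator: "br e (br f ((br f ^^ k) v))
      = br f (br e ((br f ^^ k) v)) + sc (\<gamma> t\<^sub>\<alpha> - of_nat k * \<alpha> t\<^sub>\<alpha>) ((br f ^^ k) v)" for k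
  proof -
    have "(br f ^^ k) v \<in> rs (\<lambda>h. \<gamma> h + of_nat k * - \<alpha> h)" by (rule ad_power_root_space[OF v(1) f_in])
    then show ?thesis
      using bracket_leibniz[of e f "(br f ^^ k) v"] bracket_H_root_space[OF _ t_in_H]
      by (simp add: algebra_simps)
  qed
  show ?thesis
    by (rule sl2_weight_half_multiple[where E="br e" and F="br f",
          OF vector_space_axioms bracket_right.zero bracket_scale_right commutator kernel M v(2)])
qed

lemma neg_weight_half_multiple_if_raise_lower_zero:
  assumes v: "v \<in> rs \<gamma>" "v \<noteq> 0" and kernel: "br e (br f v) = 0"
  shows "\<exists>n::nat. - \<gamma> t\<^sub>\<alpha> = \<alpha> t\<^sub>\<alpha> * of_nat n / 2"
proof -
  obtain M where M: "(br e ^^ M) v = 0" using ad_nilpotent[OF nonisotropic e_in] by blast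
  have commutator: "br f (br e ((br e ^^ k) v))
      = br e (br f ((br e ^^ k) v)) + sc (- \<gamma> t\<^sub>\<alpha> - of_nat k * \<alpha> t\<^sub>\<alpha>) ((br e ^^ k) v)" for k
  proof -
    have "(br e ^^ k) v \<in> rs (\<lambda>h. \<gamma> h + of_nat k * \<alpha> h)" by (rule ad_power_root_space[OF v(1) e_in])
    then show ?thesis
      using bracket_leibniz[of e f "(br e ^^ k) v"] bracket_H_root_space[OF _ t_in_H]
      by (simp add: algebra_simps)
  qed
  show ?thesis
    by (rule sl2_weight_half_multiple[where E="br f" and F="br e",
          OF vector_space_axioms bracket_right.zero bracket_scale_right commutator kernel M v(2)])
qed

context
  fixes \<sigma> :: "'a \<Rightarrow> complex"
  assumes sigma_root: "\<sigma> \<in> roots sc br H"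
    and sum_root: "(\<lambda>h. \<alpha> h + \<sigma> h) \<in> roots sc br H"
    and pairing_vanishes: "\<And>x y. x \<in> rs (\<lambda>h. \<alpha> h + \<sigma> h) \<Longrightarrow> y \<in> rs (\<lambda>h. - \<alpha> h - \<sigma> h)
      \<Longrightarrow> form (br x f) (br y e) = 0"
begin

lemma sum_dual: "(\<lambda>h. \<alpha> h + \<sigma> h) \<in> dual_space sc H"
  using sum_root unfolding roots_def by blast

lemma neg_sum_dual: "(\<lambda>h. - \<alpha> h - \<sigma> h) \<in> dual_space sc H"
  using dual_space_uminus[OF sum_dual] by simp

lemma lower_raise_zero_on_neg_sum:
  assumes y: "y \<in> rs (\<lambda>h. - \<alpha> h - \<sigma> h)"
  shows "br f (br e y) = 0"
proof -
  have ye: "br y e \<in> rs (\<lambda>h. - \<sigma> h)" by (rule bracket_root_spaces[OF y e_in]) simp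
  have "br f (br y e) = 0"
  proof (rule root_space_pairing_nondegenerate[OF neg_sum_dual])
    show "br f (br y e) \<in> rs (\<lambda>h. - \<alpha> h - \<sigma> h)" by (rule bracket_root_spaces[OF f_in ye]) simp
    fix z assume "z \<in> rs (\<lambda>h. - (- \<alpha> h - \<sigma> h))"
    then have "z \<in> rs (\<lambda>h. \<alpha> h + \<sigma> h)" by (simp add: add.commute)
    then have "form (br z f) (br y e) = 0" using pairing_vanishes y by blast
    then show "form (br f (br y e)) z = 0" by (simp add: form_commute[of _ z] form_invariant)
  qed
  then show ?thesis using bracket_anticomm[of e y] by (simp add: bracket_right.minus)
qed

lemma neg_sum_weight_half_multiple:
  assumes "y \<in> rs (\<lambda>h. - \<alpha> h - \<sigma> h)" "y \<noteq> 0"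
  shows "\<exists>n::nat. - \<alpha> t\<^sub>\<alpha> - \<sigma> t\<^sub>\<alpha> = \<alpha> t\<^sub>\<alpha> * of_nat n / 2"
  using weight_half_multiple_if_lower_raise_zero[OF assms lower_raise_zero_on_neg_sum[OF assms(1)]] by simp

lemma raise_zero_on_neg_sum:
  assumes y: "y \<in> rs (\<lambda>h. - \<alpha> h - \<sigma> h)"
  shows "br e y = 0"
proof (rule ccontr)
  assume nonzero: "br e y \<noteq> 0"
  have "br e y \<in> rs (\<lambda>h. - \<sigma> h)" by (rule bracket_root_spaces[OF e_in y]) simp
  moreover have "br e (br f (br e y)) = 0" using lower_raise_zero_on_neg_sum[OF y] by (simp add: bracket_right.zero)
  ultimately obtain n where n: "\<sigma> t\<^sub>\<alpha> = \<alpha> t\<^sub>\<alpha> * of_nat n / 2"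
    using neg_weight_half_multiple_if_raise_lower_zero nonzero by fastforce
  have "y \<noteq> 0" using nonzero by (auto simp: bracket_right.zero)
  then obtain m where m: "- \<alpha> t\<^sub>\<alpha> - \<sigma> t\<^sub>\<alpha> = \<alpha> t\<^sub>\<alpha> * of_nat m / 2"
    using neg_sum_weight_half_multiple y by blast
  show False by (rule neg_not_sum_of_half_multiples[OF root_t_nonzero m n])
qed

lemma sigma_weight_half_multiple: "\<exists>n::nat. \<sigma> t\<^sub>\<alpha> = \<alpha> t\<^sub>\<alpha> * of_nat n / 2"
proof -
  obtain w where w: "w \<in> rs \<sigma>" "w \<noteq> 0" using nonzero_in_root_space[OF sigma_root] by blast
  have "br e w = 0"
  proof (rule root_space_pairing_nondegenerate[OF sum_dual])
    show "br e w \<in> rs (\<lambda>h. \<alpha> h + \<sigma> h)" by (rule bracket_root_spaces[OF e_in w(1)]) simp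
    fix y assume "y \<in> rs (\<lambda>h. - (\<alpha> h + \<sigma> h))"
    then have "br e y = 0" using raise_zero_on_neg_sum by simp
    then show "form (br e w) y = 0"
      using form_invariant[of w e y] bracket_anticomm[of e w]
      by (simp add: form_left.minus form_right.zero)
  qed
  then show ?thesis using weight_half_multiple_if_lower_raise_zero[OF w] by (simp add: bracket_right.zero)
qed

lemma pairing_vanishing_absurd: False
proof -
  obtain x where "x \<in> rs (\<lambda>h. \<alpha> h + \<sigma> h)" "x \<noteq> 0"
    using nonzero_in_root_space[OF sum_root] by blast
  then obtain y where "y \<in> rs (\<lambda>h. - (\<alpha> h + \<sigma> h))" "form x y = 1"
    using root_space_pairing_partner[OF sum_dual] by blast
  then have y: "y \<in> rs (\<lambda>h. - \<alpha> h - \<sigma> h)" "y \<noteq> 0" by (auto simp: form_right.zero)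
  then obtain m where m: "- \<alpha> t\<^sub>\<alpha> - \<sigma> t\<^sub>\<alpha> = \<alpha> t\<^sub>\<alpha> * of_nat m / 2"
    using neg_sum_weight_half_multiple y by blast
  obtain n where n: "\<sigma> t\<^sub>\<alpha> = \<alpha> t\<^sub>\<alpha> * of_nat n / 2" using sigma_weight_half_multiple by blast
  show False by (rule neg_not_sum_of_half_multiples[OF root_t_nonzero m n])
qed

end

lemma bracket_pairing_nonvanishing:
  assumes "\<sigma> \<in> roots sc br H" "(\<lambda>h. \<alpha> h + \<sigma> h) \<in> roots sc br H"
  obtains x y where "x \<in> rs (\<lambda>h. \<alpha> h + \<sigma> h)" "y \<in> rs (\<lambda>h. - \<alpha> h - \<sigma> h)"
    "form (br x f) (br y e) \<noteq> 0"
  using pairing_vanishing_absurd[OF assms] by blast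

end

theorem lemma2p8:
  fixes sc :: "complex \<Rightarrow> 'a::ab_group_add \<Rightarrow> 'a" and br :: "'a \<Rightarrow> 'a \<Rightarrow> 'a"
    and form :: "'a \<Rightarrow> 'a \<Rightarrow> complex" and H :: "'a set" and \<alpha> \<sigma> :: "'a \<Rightarrow> complex"
  assumes "eala sc br form H"
    and "\<alpha> \<in> nonisotropic_roots sc br form H"
    and "\<sigma> \<in> isotropic_roots sc br form H"
    and "(\<lambda>h. \<alpha> h + \<sigma> h) \<in> roots sc br H"
  shows "{form u v | u v.
            u \<in> bracket_set sc br (root_space sc br H (\<lambda>h. \<alpha> h + \<sigma> h)) (root_space sc br H (\<lambda>h. - \<alpha> h)) \<and>
            v \<in> bracket_set sc br (root_space sc br H (\<lambda>h. - \<alpha> h - \<sigma> h)) (root_space sc br H \<alpha>)} \<noteq> {0}"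
proof -
  interpret extended_affine_lie_algebra sc br form H by unfold_locales (rule assms(1))
  have "\<alpha> \<in> roots sc br H" using assms(2) unfolding nonisotropic_roots_def by blast
  then obtain e where e: "e \<in> rs \<alpha>" "e \<noteq> 0" by (rule nonzero_in_root_space)
  have "\<alpha> \<in> dual_space sc H" using \<open>\<alpha> \<in> roots sc br H\<close> unfolding roots_def by blast
  then obtain f where "f \<in> rs (\<lambda>h. - \<alpha> h)" "form e f = 1" using e by (rule root_space_pairing_partner)
  then interpret eala_root_pair sc br form H \<alpha> e f using assms(2) e by unfold_locales
  have "\<sigma> \<in> roots sc br H" using assms(3) unfolding isotropic_roots_def by blast
  then obtain x y where "x \<in> rs (\<lambda>h. \<alpha> h + \<sigma> h)" "y \<in> rs (\<lambda>h. - \<alpha> h - \<sigma> h)"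
    and "form (br x f) (br y e) \<noteq> 0"
    using bracket_pairing_nonvanishing assms(4) by blast
  then show ?thesis using f_in e_in bracket_in_bracket_set by blast
qed

end
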